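(* Let $\mathcal{F}=\{f_i\}_{i=1}^N$ be a frame for $\mathbb{R}^n$. If $\mathcal{F}$ has the exact PR-redundancy property, then the matrices $\{f_if_i^{T}\}_{i=1}^N$ are linearly independent in the space of real symmetric $n\times n$ matrices (and hence $N\le n(n+1)/2$). The converse does not hold in general: there exist $n$ and a frame $\mathcal{F}=\{f_i\}_{i=1}^N$ for $\mathbb{R}^n$ with $\{f_if_i^T\}_{i=1}^N$ linearly independent which does not have the exact PR-redundancy property.
   Context: A frame for $\mathbb{R}^n$ is a finite spanning sequence. Let $\mathcal{S}_2$ be the set of real symmetric $n\times n$ matrices of rank at most $2$. For $\Lambda\subseteq\{1,\dots,N\}$ let $\mathcal{F}_\Lambda=\{f_i\}_{i\in\Lambda}$ and $\Theta_{L(\mathcal{F}_\Lambda)}(A)=(f_i^TAf_i)_{i\in\Lambda}$ for symmetric $A$. $\mathcal{F}$ has the exact PR-redundancy property if for every proper subset $\Lambda\subsetneq\{1,\dots,N\}$, $\ker(\Theta_{L(\mathcal{F}_\Lambda)})\cap\mathcal{S}_2\neq\ker(\Theta_{L(\mathcal{F})})\cap\mathcal{S}_2$. *)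

theory Defs
  imports "Jordan_Normal_Form.DL_Rank"
begin

text \<open>A frame with N elements is a map \<open>f :: nat \<Rightarrow> real vec\<close>
  indexed by \<open>{..<N}\<close> (the paper's index set {1..N}, shifted by one).\<close>

definition is_frame :: "nat \<Rightarrow> nat \<Rightarrow> (nat \<Rightarrow> real vec) \<Rightarrow> bool" where
  "is_frame n N f \<longleftrightarrow> (\<forall>i<N. f i \<in> carrier_vec n) \<and>
     LinearCombinations.module.span class_ring (module_vec TYPE(real) n) (f ` {..<N}) = carrier_vec n"

definition S2 :: "nat \<Rightarrow> real mat set" where
  "S2 n = {A. A \<in> carrier_mat n n \<and> A\<^sup>T = A \<and> vec_space.rank n A \<le> 2}"

definition ker_S2 :: "nat \<Rightarrow> (nat \<Rightarrow> real vec) \<Rightarrow> nat set \<Rightarrow> real mat set" where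
  "ker_S2 n f \<Lambda> = {A \<in> S2 n. \<forall>i\<in>\<Lambda>. f i \<bullet> (A *\<^sub>v f i) = 0}"

definition exact_PR_redundancy :: "nat \<Rightarrow> nat \<Rightarrow> (nat \<Rightarrow> real vec) \<Rightarrow> bool" where
  "exact_PR_redundancy n N f \<longleftrightarrow>
     (\<forall>\<Lambda>. \<Lambda> \<subset> {..<N} \<longrightarrow> ker_S2 n f \<Lambda> \<noteq> ker_S2 n f {..<N})"

definition outer :: "nat \<Rightarrow> real vec \<Rightarrow> real mat" where
  "outer n v = mat n n (\<lambda>(j, k). v $ j * v $ k)"

text \<open>Linear independence of the family \<open>(f_i f_i^T)_{i<N}\<close> (as a family, in the space of
  real n x n matrices, equivalently in the subspace of symmetric ones).\<close>
definition outer_lin_indep :: "nat \<Rightarrow> nat \<Rightarrow> (nat \<Rightarrow> real vec) \<Rightarrow> bool" where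
  "outer_lin_indep n N f \<longleftrightarrow>
     (\<forall>c :: nat \<Rightarrow> real.
        mat n n (\<lambda>(j, k). \<Sum>i<N. c i * (outer n (f i)) $$ (j, k)) = 0\<^sub>m n n
        \<longrightarrow> (\<forall>i<N. c i = 0))"

end

theory Submission
  imports Defs
begin

text \<open>If some \<open>c\<^sub>j \<noteq> 0\<close> in a vanishing combination \<open>\<Sum> c\<^sub>i f\<^sub>i f\<^sub>i\<^sup>T = 0\<close>, then pairing with any
  symmetric \<open>A\<close> gives \<open>\<Sum> c\<^sub>i f\<^sub>i\<^sup>T A f\<^sub>i = 0\<close>, so the constraint at \<open>j\<close> is implied by the others
  and dropping \<open>j\<close> does not change the kernel; this contradicts exact PR-redundancy. Independence
  then bounds \<open>N\<close> by the dimension \<open>n(n+1)/2\<close> of the symmetric matrices.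
  The converse fails: take \<open>e\<^sub>1, e\<^sub>2, e\<^sub>3, (1,1,1), (1,2,3), (1,1,0)\<close> in \<open>\<real>\<^sup>3\<close>: their outer products
  form a basis, but a symmetric matrix annihilated by the first five quadratic forms is a
  multiple of a fixed nonsingular matrix, so if it has rank at most 2 it is zero and the sixth
  constraint is redundant.\<close>

lemma quadratic_form_outer:
  fixes A :: "real mat"
  assumes A: "A \<in> carrier_mat n n" and v: "v \<in> carrier_vec n"
  shows "v \<bullet> (A *\<^sub>v v) = (\<Sum>a<n. \<Sum>b<n. A $$ (a,b) * outer n v $$ (a,b))"
proof -
  have "v \<bullet> (A *\<^sub>v v) = (\<Sum>a<n. v $ a * (\<Sum>b<n. A $$ (a,b) * v $ b))"
    using A v by (auto simp: scalar_prod_def mult_mat_vec_def atLeast0LessThan intro!: sum.cong)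
  also have "\<dots> = (\<Sum>a<n. \<Sum>b<n. A $$ (a,b) * outer n v $$ (a,b))"
    by (auto simp: outer_def sum_distrib_left intro!: sum.cong)
  finally show ?thesis .
qed

lemma outer_combination_zero_imp_quadratic_forms:
  assumes f: "\<forall>i<N. f i \<in> carrier_vec n"
    and comb: "mat n n (\<lambda>(j, k). \<Sum>i<N. c i * outer n (f i) $$ (j, k)) = 0\<^sub>m n n"
    and A: "A \<in> carrier_mat n n"
  shows "(\<Sum>i<N. c i * (f i \<bullet> (A *\<^sub>v f i))) = 0"
proof -
  have entry: "(\<Sum>i<N. c i * outer n (f i) $$ (a, b)) = 0" if "a < n" "b < n" for a b
    using arg_cong[OF comb, of "\<lambda>M. M $$ (a, b)"] that by simp
  have "(\<Sum>i<N. c i * (f i \<bullet> (A *\<^sub>v f i))) =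
        (\<Sum>i<N. c i * (\<Sum>a<n. \<Sum>b<n. A $$ (a,b) * outer n (f i) $$ (a,b)))"
    using quadratic_form_outer[OF A] f by simp
  also have "\<dots> = (\<Sum>a<n. \<Sum>b<n. A $$ (a,b) * (\<Sum>i<N. c i * outer n (f i) $$ (a,b)))"
    by (simp add: sum_distrib_left sum_distrib_right mult_ac sum.swap[of _ "{..<N}"])
  also have "\<dots> = 0"
    using entry by simp
  finally show ?thesis .
qed

lemma ker_S2_remove_dependent_index:
  assumes dep: "\<And>A. A \<in> carrier_mat n n \<Longrightarrow> (\<Sum>i\<in>\<Lambda>. c i * (f i \<bullet> (A *\<^sub>v f i))) = 0"
    and "finite \<Lambda>" "j \<in> \<Lambda>" "c j \<noteq> 0"
  shows "ker_S2 n f (\<Lambda> - {j}) = ker_S2 n f \<Lambda>"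
proof (rule equalityI)
  show "ker_S2 n f (\<Lambda> - {j}) \<subseteq> ker_S2 n f \<Lambda>"
  proof
    fix A assume A: "A \<in> ker_S2 n f (\<Lambda> - {j})"
    then have zero: "\<forall>i\<in>\<Lambda> - {j}. f i \<bullet> (A *\<^sub>v f i) = 0"
      unfolding ker_S2_def by auto
    have "0 = (\<Sum>i\<in>\<Lambda>. c i * (f i \<bullet> (A *\<^sub>v f i)))"
      using dep A by (simp add: ker_S2_def S2_def)
    also have "\<dots> = c j * (f j \<bullet> (A *\<^sub>v f j)) + (\<Sum>i\<in>\<Lambda> - {j}. c i * (f i \<bullet> (A *\<^sub>v f i)))"
      using assms(2,3) by (rule sum.remove)
    also have "\<dots> = c j * (f j \<bullet> (A *\<^sub>v f j))"
      using zero by simp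
    finally have "f j \<bullet> (A *\<^sub>v f j) = 0"
      using \<open>c j \<noteq> 0\<close> by simp
    then show "A \<in> ker_S2 n f \<Lambda>"
      using A zero unfolding ker_S2_def by blast
  qed
qed (auto simp: ker_S2_def)

lemma exact_PR_redundancy_imp_outer_lin_indep:
  assumes f: "\<forall>i<N. f i \<in> carrier_vec n" and exact: "exact_PR_redundancy n N f"
  shows "outer_lin_indep n N f"
  unfolding outer_lin_indep_def
proof (rule allI, rule impI)
  fix c :: "nat \<Rightarrow> real"
  assume comb: "mat n n (\<lambda>(j, k). \<Sum>i<N. c i * outer n (f i) $$ (j, k)) = 0\<^sub>m n n"
  show "\<forall>i<N. c i = 0"
  proof (rule ccontr)
    assume "\<not> (\<forall>i<N. c i = 0)"
    then obtain j where j: "j < N" "c j \<noteq> 0" by auto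
    have "ker_S2 n f ({..<N} - {j}) = ker_S2 n f {..<N}"
      using outer_combination_zero_imp_quadratic_forms[OF f comb] j
      by (intro ker_S2_remove_dependent_index) auto
    moreover have "{..<N} - {j} \<subset> {..<N}"
      using j by auto
    ultimately show False
      using exact unfolding exact_PR_redundancy_def by blast
  qed
qed

lemma card_upper_triangle: "2 * card {(j::nat, k). j \<le> k \<and> k < n} = n * (n + 1)"
proof (induction n)
  case 0
  then show ?case by simp
next
  case (Suc n)
  let ?T = "{(j::nat, k). j \<le> k \<and> k < n}"
  have split: "{(j::nat, k). j \<le> k \<and> k < Suc n} = ?T \<union> (\<lambda>j. (j, n)) ` {..n}"
    by auto
  have "finite ?T"
    by (rule finite_subset[of _ "{..<n} \<times> {..<n}"]) auto
  then have "card (?T \<union> (\<lambda>j. (j, n)) ` {..n}) = card ?T + card ((\<lambda>j. (j, n)) ` {..n})"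
    by (intro card_Un_disjoint) auto
  moreover have "card ((\<lambda>j. (j, n)) ` {..n}) = Suc n"
    by (subst card_image) (auto simp: inj_on_def)
  ultimately show ?case
    using Suc split by (simp add: algebra_simps)
qed

text \<open>The square matrix whose rows beyond \<open>m\<close> are zero is singular, so it has a nonzero kernel vector.\<close>
lemma underdetermined_homogeneous_system:
  fixes a :: "nat \<Rightarrow> nat \<Rightarrow> 'a :: field"
  assumes "m < N"
  obtains v where "v \<in> carrier_vec N" "v \<noteq> 0\<^sub>v N" "\<And>r. r < m \<Longrightarrow> (\<Sum>i<N. a r i * v $ i) = 0"
proof -
  define rows where "rows = (\<lambda>r. vec N (\<lambda>i. if r < m then a r i else 0))"
  define M where "M = mat\<^sub>r N N rows"
  have "M = mat\<^sub>r N N (\<lambda>r. if r = N - 1 then 0\<^sub>v N else rows r)"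
    unfolding M_def using assms by (intro eq_matI) (auto simp: rows_def)
  then have "det M = 0"
    using assms by (simp add: det_row_0 rows_def)
  then obtain v where v: "v \<in> carrier_vec N" "v \<noteq> 0\<^sub>v N" "M *\<^sub>v v = 0\<^sub>v N"
    using det_0_iff_vec_prod_zero_field[of M N] unfolding M_def by auto
  have "(\<Sum>i<N. a r i * v $ i) = 0" if "r < m" for r
  proof -
    have "(\<Sum>i<N. a r i * v $ i) = (M *\<^sub>v v) $ r"
      using that assms v(1) by (simp add: M_def rows_def scalar_prod_def atLeast0LessThan mult.commute)
    then show ?thesis
      using v(3) that assms by simp
  qed
  with v that show ?thesis by blast
qed

lemma outer_lin_indep_imp_card_le:
  assumes indep: "outer_lin_indep n N f"
  shows "2 * N \<le> n * (n + 1)"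
proof (rule ccontr)
  define P where "P = {(j::nat, k). j \<le> k \<and> k < n}"
  assume "\<not> 2 * N \<le> n * (n + 1)"
  then have less: "card P < N"
    using card_upper_triangle[of n] unfolding P_def by linarith
  have "finite P"
    unfolding P_def by (rule finite_subset[of _ "{..<n} \<times> {..<n}"]) auto
  then obtain g where g: "bij_betw g {0..<card P} P"
    using ex_bij_betw_nat_finite by blast
  obtain v :: "real vec" where v: "v \<in> carrier_vec N" "v \<noteq> 0\<^sub>v N"
    and sol: "\<And>r. r < card P \<Longrightarrow> (\<Sum>i<N. outer n (f i) $$ g r * v $ i) = 0"
    using underdetermined_homogeneous_system[OF less, of "\<lambda>r i. outer n (f i) $$ g r"] by blast
  have on_P: "(\<Sum>i<N. v $ i * outer n (f i) $$ p) = 0" if "p \<in> P" for p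
  proof -
    have "p \<in> g ` {0..<card P}"
      using g that by (simp add: bij_betw_def)
    then obtain r where "r < card P" "p = g r"
      by auto
    then show ?thesis
      using sol[of r] by (simp add: mult.commute)
  qed
  \<comment> \<open>outer products are symmetric, so vanishing on the upper triangle \<open>P\<close> suffices\<close>
  have comb: "mat n n (\<lambda>(j, k). \<Sum>i<N. v $ i * outer n (f i) $$ (j, k)) = 0\<^sub>m n n"
  proof (rule eq_matI)
    fix a b assume "a < dim_row (0\<^sub>m n n :: real mat)" "b < dim_col (0\<^sub>m n n :: real mat)"
    then have ab: "a < n" "b < n" by auto
    have "(\<Sum>i<N. v $ i * outer n (f i) $$ (a, b)) = (\<Sum>i<N. v $ i * outer n (f i) $$ (b, a))"
      using ab by (intro sum.cong) (auto simp: outer_def mult.commute)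
    then show "mat n n (\<lambda>(j, k). \<Sum>i<N. v $ i * outer n (f i) $$ (j, k)) $$ (a, b) = 0\<^sub>m n n $$ (a, b)"
      using ab on_P[of "(a, b)"] on_P[of "(b, a)"] by (cases "a \<le> b") (auto simp: P_def)
  qed auto
  have "v = 0\<^sub>v N"
    using v(1) indep[unfolded outer_lin_indep_def, rule_format, OF comb] by (intro eq_vecI) auto
  with v(2) show False ..
qed

lemma is_frame_if_unit_vecs:
  assumes f: "\<forall>i<N. f i \<in> carrier_vec n" and units: "set (unit_vecs n) \<subseteq> f ` {..<N}"
  shows "is_frame n N f"
proof -
  let ?span = "LinearCombinations.module.span class_ring (module_vec TYPE(real) n)"
  have "carrier_vec n = ?span (set (unit_vecs n))"
    using vec_space.span_unit_vecs_is_carrier[of n] by metis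
  also have "\<dots> \<subseteq> ?span (f ` {..<N})"
    by (rule module.span_is_monotone[OF vec_module units])
  finally have "carrier_vec n \<subseteq> ?span (f ` {..<N})" .
  moreover have "?span (f ` {..<N}) \<subseteq> carrier_vec n"
    using module.span_is_subset2[OF vec_module, of "f ` {..<N}" n] f
    by (auto simp: module_vec_simps)
  ultimately show ?thesis
    using f unfolding is_frame_def by blast
qed

lemma S2_singular:
  assumes "A \<in> S2 n" "2 < n"
  obtains v where "v \<in> carrier_vec n" "v \<noteq> 0\<^sub>v n" "A *\<^sub>v v = 0\<^sub>v n"
proof -
  have A: "A \<in> carrier_mat n n" and "vec_space.rank n A \<le> 2"
    using assms(1) unfolding S2_def by auto
  then have "det A = 0"
    using vec_space.det_rank_iff[OF A] assms(2) by auto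
  then show ?thesis
    using det_0_iff_vec_prod_zero_field[OF A] that by auto
qed

definition ex_frame :: "nat \<Rightarrow> real vec" where
  "ex_frame i = vec 3 (\<lambda>j. [[1,0,0], [0,1,0], [0,0,1], [1,1,1], [1,2,3], [1,1,0]] ! i ! j)"

definition ex_kernel_matrix :: "real mat" where
  "ex_kernel_matrix = mat 3 3 (\<lambda>(j, k). [[0,3,-4], [3,0,1], [-4,1,0]] ! j ! k)"

lemma less_3_cases: "(i::nat) < 3 \<Longrightarrow> i = 0 \<or> i = 1 \<or> i = 2"
  by arith

lemma sum_less_3: "(\<Sum>i<(3::nat). g i) = g 0 + g 1 + (g 2 :: 'a :: comm_monoid_add)"
  by (simp add: eval_nat_numeral)

lemma ex_frame_carrier: "ex_frame i \<in> carrier_vec 3"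
  by (simp add: ex_frame_def)

lemma ex_frame_unit_vec: "i < 3 \<Longrightarrow> ex_frame i = unit_vec 3 i"
proof (rule eq_vecI)
  fix j assume "i < 3" "j < dim_vec (unit_vec 3 i :: real vec)"
  then show "ex_frame i $ j = unit_vec 3 i $ j"
    using less_3_cases[of i] less_3_cases[of j] by (auto simp: ex_frame_def)
qed (simp add: ex_frame_def)

lemma is_frame_ex_frame: "is_frame 3 6 ex_frame"
proof (rule is_frame_if_unit_vecs)
  show "set (unit_vecs 3) \<subseteq> ex_frame ` {..<6}"
  proof
    fix u :: "real vec" assume "u \<in> set (unit_vecs 3)"
    then obtain i where "i < 3" "u = unit_vec 3 i"
      unfolding unit_vecs_def by auto
    then show "u \<in> ex_frame ` {..<6}"
      using ex_frame_unit_vec[of i] by (intro image_eqI[of _ _ i]) auto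
  qed
qed (simp add: ex_frame_carrier)

lemma outer_lin_indep_ex_frame: "outer_lin_indep 3 6 ex_frame"
  unfolding outer_lin_indep_def
proof (rule allI, rule impI)
  fix c :: "nat \<Rightarrow> real"
  assume comb: "mat 3 3 (\<lambda>(j, k). \<Sum>i<6. c i * outer 3 (ex_frame i) $$ (j, k)) = 0\<^sub>m 3 3"
  have eq: "(\<Sum>i<6. c i * (ex_frame i $ a * ex_frame i $ b)) = 0" if "a < 3" "b < 3" for a b
    using arg_cong[OF comb, of "\<lambda>M. M $$ (a, b)"] that by (simp add: outer_def ex_frame_def)
  have "c 0 + c 3 + c 4 + c 5 = 0" "c 1 + c 3 + 4 * c 4 + c 5 = 0" "c 2 + c 3 + 9 * c 4 = 0"
    "c 3 + 2 * c 4 + c 5 = 0" "c 3 + 3 * c 4 = 0" "c 3 + 6 * c 4 = 0"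
    using eq[of 0 0] eq[of 1 1] eq[of 2 2] eq[of 0 1] eq[of 0 2] eq[of 1 2]
    by (simp_all add: ex_frame_def eval_nat_numeral)
  then have "c 0 = 0" "c 1 = 0" "c 2 = 0" "c 3 = 0" "c 4 = 0" "c 5 = 0"
    by linarith+
  then show "\<forall>i<6. c i = 0"
    by (auto simp: less_Suc_eq numeral_eq_Suc)
qed

lemma ex_frame_annihilator_eq_smult:
  assumes A: "A \<in> carrier_mat 3 3" and sym: "A\<^sup>T = A"
    and zero: "\<And>i. i < 5 \<Longrightarrow> ex_frame i \<bullet> (A *\<^sub>v ex_frame i) = 0"
  shows "A = A $$ (1, 2) \<cdot>\<^sub>m ex_kernel_matrix"
proof -
  have entry_sym: "A $$ (b, a) = A $$ (a, b)" if "a < 3" "b < 3" for a b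
    using arg_cong[OF sym, of "\<lambda>M. M $$ (a, b)"] A that by simp
  have form: "(\<Sum>a<3. \<Sum>b<3. A $$ (a, b) * (ex_frame i $ a * ex_frame i $ b)) = 0" if "i < 5" for i
    using zero[OF that] quadratic_form_outer[OF A ex_frame_carrier]
    by (simp add: outer_def ex_frame_def)
  have diag: "A $$ (0, 0) = 0" "A $$ (1, 1) = 0" "A $$ (2, 2) = 0"
    using form[of 0] form[of 1] form[of 2] by (simp_all add: sum_less_3 ex_frame_def)
  have offdiag: "A $$ (1, 0) = A $$ (0, 1)" "A $$ (2, 0) = A $$ (0, 2)" "A $$ (2, 1) = A $$ (1, 2)"
    using entry_sym[of 0 1] entry_sym[of 0 2] entry_sym[of 1 2] by simp_all
  have "A $$ (0, 1) + A $$ (0, 2) + A $$ (1, 2) = 0"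
    "2 * A $$ (0, 1) + 3 * A $$ (0, 2) + 6 * A $$ (1, 2) = 0"
    using form[of 3] form[of 4] diag offdiag by (simp_all add: sum_less_3 ex_frame_def algebra_simps)
  then have "A $$ (0, 1) = 3 * A $$ (1, 2)" "A $$ (0, 2) = - 4 * A $$ (1, 2)"
    by linarith+
  note entries = diag offdiag this
  show ?thesis
  proof (rule eq_matI)
    fix a b assume "a < dim_row (A $$ (1, 2) \<cdot>\<^sub>m ex_kernel_matrix)"
      "b < dim_col (A $$ (1, 2) \<cdot>\<^sub>m ex_kernel_matrix)"
    then have "a < 3" "b < 3"
      by (simp_all add: ex_kernel_matrix_def)
    then show "A $$ (a, b) = (A $$ (1, 2) \<cdot>\<^sub>m ex_kernel_matrix) $$ (a, b)"
      using less_3_cases[of a] less_3_cases[of b] entries by (auto simp: ex_kernel_matrix_def)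
  qed (use A in \<open>simp_all add: ex_kernel_matrix_def\<close>)
qed

lemma ex_kernel_matrix_nonsingular:
  assumes v: "v \<in> carrier_vec 3" and "ex_kernel_matrix *\<^sub>v v = 0\<^sub>v 3"
  shows "v = 0\<^sub>v 3"
proof -
  have row: "(\<Sum>j<3. ex_kernel_matrix $$ (r, j) * v $ j) = 0" if "r < 3" for r
    using arg_cong[OF assms(2), of "\<lambda>w. w $ r"] v that
    by (simp add: ex_kernel_matrix_def scalar_prod_def atLeast0LessThan)
  have "3 * v $ 1 - 4 * v $ 2 = 0" "3 * v $ 0 + v $ 2 = 0" "- 4 * v $ 0 + v $ 1 = 0"
    using row[of 0] row[of 1] row[of 2] by (simp_all add: sum_less_3 ex_kernel_matrix_def)
  then have "v $ 0 = 0" "v $ 1 = 0" "v $ 2 = 0"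
    by linarith+
  then show ?thesis
    using v less_3_cases by (intro eq_vecI) auto
qed

lemma ker_S2_ex_frame_trivial:
  assumes A: "A \<in> ker_S2 3 ex_frame {..<5}"
  shows "A = 0\<^sub>m 3 3"
proof -
  have S2: "A \<in> S2 3"
    using A unfolding ker_S2_def by auto
  define w where "w = A $$ (1, 2)"
  have Aw: "A = w \<cdot>\<^sub>m ex_kernel_matrix"
    unfolding w_def using A
    by (intro ex_frame_annihilator_eq_smult) (auto simp: ker_S2_def S2_def)
  obtain v where v: "v \<in> carrier_vec 3" "v \<noteq> 0\<^sub>v 3" "A *\<^sub>v v = 0\<^sub>v 3"
    using S2_singular[OF S2] by auto
  have "w = 0"
  proof (rule ccontr)
    assume "w \<noteq> 0"
    have "(ex_kernel_matrix *\<^sub>v v) $ r = 0" if "r < 3" for r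
    proof -
      have "w * (ex_kernel_matrix *\<^sub>v v) $ r = (A *\<^sub>v v) $ r"
        unfolding Aw using that v(1)
        by (simp add: ex_kernel_matrix_def scalar_prod_def sum_distrib_left mult.assoc)
      then show ?thesis
        using v(3) that \<open>w \<noteq> 0\<close> by simp
    qed
    then have "ex_kernel_matrix *\<^sub>v v = 0\<^sub>v 3"
      by (intro eq_vecI) (simp_all add: ex_kernel_matrix_def)
    with v show False
      using ex_kernel_matrix_nonsingular by blast
  qed
  then show ?thesis
    using Aw by (intro eq_matI) (auto simp: ex_kernel_matrix_def)
qed

lemma not_exact_PR_redundancy_ex_frame: "\<not> exact_PR_redundancy 3 6 ex_frame"
proof -
  have "ker_S2 3 ex_frame {..<5} = ker_S2 3 ex_frame {..<6}"
  proof (rule equalityI)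
    show "ker_S2 3 ex_frame {..<5} \<subseteq> ker_S2 3 ex_frame {..<6}"
    proof
      fix A assume A: "A \<in> ker_S2 3 ex_frame {..<5}"
      then have "A = 0\<^sub>m 3 3"
        by (rule ker_S2_ex_frame_trivial)
      then have "ex_frame i \<bullet> (A *\<^sub>v ex_frame i) = 0" for i
        using quadratic_form_outer[OF _ ex_frame_carrier, of A] by simp
      then show "A \<in> ker_S2 3 ex_frame {..<6}"
        using A by (simp add: ker_S2_def)
    qed
  qed (auto simp: ker_S2_def)
  moreover have "{..<5::nat} \<subset> {..<6}"
    by auto
  ultimately show ?thesis
    unfolding exact_PR_redundancy_def not_all not_imp by (intro exI[of _ "{..<5}"]) simp
qed

theorem lemma1p5:
  shows "(\<forall>(n::nat) (N::nat) (f :: nat \<Rightarrow> real vec).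
            is_frame n N f \<and> exact_PR_redundancy n N f \<longrightarrow>
              outer_lin_indep n N f \<and> 2 * N \<le> n * (n + 1))
       \<and> (\<exists>(n::nat) (N::nat) (f :: nat \<Rightarrow> real vec).
            is_frame n N f \<and> outer_lin_indep n N f \<and> \<not> exact_PR_redundancy n N f)"
proof (intro conjI allI impI)
  fix n N :: nat and f :: "nat \<Rightarrow> real vec"
  assume "is_frame n N f \<and> exact_PR_redundancy n N f"
  then show "outer_lin_indep n N f"
    by (intro exact_PR_redundancy_imp_outer_lin_indep) (auto simp: is_frame_def)
  then show "2 * N \<le> n * (n + 1)"
    by (rule outer_lin_indep_imp_card_le)
next
  show "\<exists>n N f. is_frame n N f \<and> outer_lin_indep n N f \<and> \<not> exact_PR_redundancy n N f"
    using is_frame_ex_frame outer_lin_indep_ex_frame not_exact_PR_redundancy_ex_frame by blast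
qed

end
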